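(* Let $G=(V,E)$ be an undirected graph and $\mu$ an orientation of its edges. Let $\mathcal D$ be an AD paths decomposition of $(G,\mu)$ with degree at most 1. Coloring each path in $\mathcal D$ using two alternating colors yields an oriented degree-splitting $(E_1,E_2)$ of $(G,\mu)$ with discrepancy at most 1.
   Context: A path here is a trail $P=(v_0,e_1,v_1,\dots,e_k,v_k)$ (a walk with pairwise distinct edges, vertices may repeat; if $v_0=v_k$ it is called a cycle). $P$ is an alternating-directions (AD) path if for every $1\le i<k$, the edges $e_i,e_{i+1}$ are either both oriented (under $\mu$) towards $v_i$ or both oriented away from $v_i$. $v_0$ is an incoming endpoint of $P$ if $e_1$ is oriented towards $v_0$, and an outgoing endpoint otherwise; symmetrically $v_k$ is an incoming endpoint if $e_k$ is oriented towards $v_k$, and an outgoing endpoint otherwise. An AD paths decomposition of $(G,\mu)$ with degree at most $\kappa$ is a partition of $E$ into edge-disjoint AD paths such that each vertex is an incoming endpoint of at most $\kappa$ of these paths and an outgoing endpoint of at most $\kappa$ of these paths. Coloring a path with two alternating colors means consecutive edges $e_i,e_{i+1}$ of the path receive opposite colors (one of two colors). An oriented degree-splitting with discrepancy $\kappa$ is a partition $(E_1,E_2)$ of $E$ such that for every vertex $v$, the numbers of incoming edges at $v$ in $E_1$ and in $E_2$ differ by at most $\kappa$, and the numbers of outgoing edges at $v$ in $E_1$ and in $E_2$ differ by at most $\kappa$. *)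

theory Defs
  imports Main
begin

text \<open>An undirected graph G = (V,E) together with an orientation mu is represented by
  an edge set E of abstract edges and two functions tail, head giving, for each edge,
  the endpoint it is oriented away from (tail) and towards (head) under mu.\<close>

definition oriented_graph :: "'v set \<Rightarrow> 'e set \<Rightarrow> ('e \<Rightarrow> 'v) \<Rightarrow> ('e \<Rightarrow> 'v) \<Rightarrow> bool" where
  "oriented_graph V E tail head \<longleftrightarrow> finite V \<and> finite E \<and>
     (\<forall>e\<in>E. tail e \<in> V \<and> head e \<in> V \<and> tail e \<noteq> head e) \<and>
     inj_on (\<lambda>e. {tail e, head e}) E"

text \<open>A trail P = (v0, e1, v1, ..., ek, vk): vertex list vs (length k+1), edge list es
  (length k), pairwise distinct edges, e_(i+1) joins v_i and v_(i+1).\<close>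

definition trail :: "'e set \<Rightarrow> ('e \<Rightarrow> 'v) \<Rightarrow> ('e \<Rightarrow> 'v) \<Rightarrow> 'v list \<times> 'e list \<Rightarrow> bool" where
  "trail E tail head P \<longleftrightarrow> (case P of (vs, es) \<Rightarrow>
     length vs = length es + 1 \<and> distinct es \<and> set es \<subseteq> E \<and>
     (\<forall>i<length es. {tail (es ! i), head (es ! i)} = {vs ! i, vs ! Suc i}))"

definition ad_path :: "'e set \<Rightarrow> ('e \<Rightarrow> 'v) \<Rightarrow> ('e \<Rightarrow> 'v) \<Rightarrow> 'v list \<times> 'e list \<Rightarrow> bool" where
  "ad_path E tail head P \<longleftrightarrow> trail E tail head P \<and> (case P of (vs, es) \<Rightarrow>
     es \<noteq> [] \<and>
     (\<forall>i. 0 < i \<and> i < length es \<longrightarrow>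
        (head (es ! (i - 1)) = vs ! i \<and> head (es ! i) = vs ! i) \<or>
        (tail (es ! (i - 1)) = vs ! i \<and> tail (es ! i) = vs ! i)))"

definition incoming_endpoint :: "('e \<Rightarrow> 'v) \<Rightarrow> 'v \<Rightarrow> 'v list \<times> 'e list \<Rightarrow> bool" where
  "incoming_endpoint head v P \<longleftrightarrow> (case P of (vs, es) \<Rightarrow>
     (v = vs ! 0 \<and> head (es ! 0) = v) \<or> (v = last vs \<and> head (last es) = v))"

definition outgoing_endpoint :: "('e \<Rightarrow> 'v) \<Rightarrow> 'v \<Rightarrow> 'v list \<times> 'e list \<Rightarrow> bool" where
  "outgoing_endpoint head v P \<longleftrightarrow> (case P of (vs, es) \<Rightarrow>
     (v = vs ! 0 \<and> head (es ! 0) \<noteq> v) \<or> (v = last vs \<and> head (last es) \<noteq> v))"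

definition ad_decomposition ::
  "'v set \<Rightarrow> 'e set \<Rightarrow> ('e \<Rightarrow> 'v) \<Rightarrow> ('e \<Rightarrow> 'v) \<Rightarrow> ('v list \<times> 'e list) set \<Rightarrow> nat \<Rightarrow> bool" where
  "ad_decomposition V E tail head D \<kappa> \<longleftrightarrow>
     finite D \<and>
     (\<forall>P\<in>D. ad_path E tail head P) \<and>
     (\<forall>P\<in>D. \<forall>Q\<in>D. P \<noteq> Q \<longrightarrow> set (snd P) \<inter> set (snd Q) = {}) \<and>
     (\<Union>P\<in>D. set (snd P)) = E \<and>
     (\<forall>v\<in>V. card {P\<in>D. incoming_endpoint head v P} \<le> \<kappa> \<and>
             card {P\<in>D. outgoing_endpoint head v P} \<le> \<kappa>)"

definition alternating_colouring :: "('v list \<times> 'e list) set \<Rightarrow> ('e \<Rightarrow> bool) \<Rightarrow> bool" where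
  "alternating_colouring D c \<longleftrightarrow>
     (\<forall>P\<in>D. \<forall>i. Suc i < length (snd P) \<longrightarrow> c (snd P ! i) \<noteq> c (snd P ! Suc i))"

definition oriented_degree_splitting ::
  "'v set \<Rightarrow> 'e set \<Rightarrow> ('e \<Rightarrow> 'v) \<Rightarrow> ('e \<Rightarrow> 'v) \<Rightarrow> 'e set \<Rightarrow> 'e set \<Rightarrow> nat \<Rightarrow> bool" where
  "oriented_degree_splitting V E tail head E1 E2 \<kappa> \<longleftrightarrow>
     E1 \<union> E2 = E \<and> E1 \<inter> E2 = {} \<and>
     (\<forall>v\<in>V.
        \<bar>int (card {e\<in>E1. head e = v}) - int (card {e\<in>E2. head e = v})\<bar> \<le> int \<kappa> \<and>
        \<bar>int (card {e\<in>E1. tail e = v}) - int (card {e\<in>E2. tail e = v})\<bar> \<le> int \<kappa>)"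

end

theory Submission
  imports Defs
begin

(* Count each edge with sign +1 or -1 according to its colour; the in-discrepancy at v is then
   the signed number of edges entering v, and it splits over the paths of the decomposition.
   Along an AD path the directions of consecutive edges alternate, and so do the colours, hence
   the colour of an edge is determined by its direction. At an inner visit of v the two path
   edges both enter v or both leave it, and cancel; a first edge entering v_0 and a last edge
   entering v_k point in opposite directions and have opposite signs. So every path contributes
   -1, 0 or 1, and only when v is an incoming endpoint of it, which happens for at most one path.
   Out-discrepancies are in-discrepancies of the reversed orientation. *)

lemma alternating_sequences_agree:
  assumes "\<And>j. Suc j < k \<Longrightarrow> a (Suc j) \<longleftrightarrow> \<not> a j"
    and "\<And>j. Suc j < k \<Longrightarrow> b (Suc j) \<longleftrightarrow> \<not> b j"
    and "j < k"
  shows "(a j \<longleftrightarrow> b j) \<longleftrightarrow> (a 0 \<longleftrightarrow> b 0)"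
  using assms(3)
proof (induction j)
  case (Suc j)
  then show ?case using assms(1,2)[of j] by auto
qed simp

lemma alternating_direction_sum:
  fixes F :: "nat \<Rightarrow> bool" and x :: "nat \<Rightarrow> 'a"
  assumes "0 < k" and alternates: "\<And>j. Suc j < k \<Longrightarrow> F (Suc j) \<longleftrightarrow> \<not> F j"
  shows "(\<Sum>j<k. if F j then of_bool (x (Suc j) = a) else - of_bool (x j = a)) =
    (of_bool (F (k - 1) \<and> x k = a) - of_bool (\<not> F 0 \<and> x 0 = a) :: int)"
proof -
  \<comment> \<open>H i: position i carries a, and the edges at position i point into it\<close>
  define H :: "nat \<Rightarrow> int"
    where "H i = of_bool (x i = a \<and> (i < k \<longrightarrow> \<not> F i) \<and> (0 < i \<longrightarrow> F (i - 1)))" for i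
  have "(if F j then of_bool (x (Suc j) = a) else - of_bool (x j = a)) = H (Suc j) - H j"
    if "j < k" for j
    using that alternates[of j] alternates[of "j - 1"] by (cases j) (auto simp: H_def)
  then have "(\<Sum>j<k. if F j then of_bool (x (Suc j) = a) else - of_bool (x j = a)) =
      (\<Sum>j<k. H (Suc j) - H j)"
    by simp
  also have "\<dots> = H k - H 0"
    by (rule sum_lessThan_telescope)
  also have "\<dots> = of_bool (F (k - 1) \<and> x k = a) - of_bool (\<not> F 0 \<and> x 0 = a)"
    using assms(1) by (auto simp: H_def)
  finally show ?thesis .
qed

lemma trail_edge_ends:
  assumes "trail E tail head (vs, es)" and "j < length es"
  shows "tail (es ! j) = vs ! j \<and> head (es ! j) = vs ! Suc j \<or>
    tail (es ! j) = vs ! Suc j \<and> head (es ! j) = vs ! j"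
  using assms by (auto simp: trail_def doubleton_eq_iff)

lemma ad_path_direction_alternates:
  assumes ad: "ad_path E tail head (vs, es)" and loopless: "\<forall>e\<in>set es. tail e \<noteq> head e"
    and "Suc j < length es"
  shows "head (es ! Suc j) = vs ! Suc (Suc j) \<longleftrightarrow> head (es ! j) \<noteq> vs ! Suc j"
proof -
  have "trail E tail head (vs, es)"
    using ad by (simp add: ad_path_def)
  then have "tail (es ! j) = vs ! j \<and> head (es ! j) = vs ! Suc j \<or>
      tail (es ! j) = vs ! Suc j \<and> head (es ! j) = vs ! j"
    "tail (es ! Suc j) = vs ! Suc j \<and> head (es ! Suc j) = vs ! Suc (Suc j) \<or>
      tail (es ! Suc j) = vs ! Suc (Suc j) \<and> head (es ! Suc j) = vs ! Suc j"
    using trail_edge_ends \<open>Suc j < length es\<close> by (metis Suc_lessD)+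
  moreover have "tail (es ! j) \<noteq> head (es ! j)" "tail (es ! Suc j) \<noteq> head (es ! Suc j)"
    using loopless \<open>Suc j < length es\<close> by (simp_all add: Suc_lessD)
  moreover have "head (es ! j) = vs ! Suc j \<and> head (es ! Suc j) = vs ! Suc j \<or>
      tail (es ! j) = vs ! Suc j \<and> tail (es ! Suc j) = vs ! Suc j"
    using ad \<open>Suc j < length es\<close> unfolding ad_path_def by (auto dest!: spec[of _ "Suc j"])
  ultimately show ?thesis
    by auto
qed

definition colour_sign :: "('e \<Rightarrow> bool) \<Rightarrow> 'e \<Rightarrow> int" where
  "colour_sign c e = (if c e then 1 else -1)"

lemma ad_path_head_balance:
  assumes ad: "ad_path E tail head (vs, es)" and loopless: "\<forall>e\<in>set es. tail e \<noteq> head e"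
    and alternating: "\<forall>i. Suc i < length es \<longrightarrow> c (es ! i) \<noteq> c (es ! Suc i)"
  shows "\<exists>s\<in>{-1, 1}. (\<Sum>e\<leftarrow>es. if head e = v then colour_sign c e else 0) =
    s * (of_bool (v = last vs \<and> head (last es) = v) - of_bool (v = vs ! 0 \<and> head (es ! 0) = v))"
proof -
  define k where "k = length es"
  define forward where "forward j \<longleftrightarrow> head (es ! j) = vs ! Suc j" for j
  have trail: "trail E tail head (vs, es)" and "0 < k" and "length vs = Suc k"
    using ad by (auto simp: ad_path_def trail_def k_def)
  have forward_alternates: "forward (Suc j) \<longleftrightarrow> \<not> forward j" if "Suc j < k" for j
    using ad_path_direction_alternates[OF ad loopless] that by (simp add: forward_def k_def)
  have colour_by_direction: "(c (es ! j) \<longleftrightarrow> forward j) \<longleftrightarrow> (c (es ! 0) \<longleftrightarrow> forward 0)"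
    if "j < k" for j
    using alternating_sequences_agree[of k "\<lambda>j. c (es ! j)" forward, OF _ forward_alternates that]
      alternating by (auto simp: k_def)
  define s :: int where "s = (if c (es ! 0) \<longleftrightarrow> forward 0 then 1 else -1)"
  have "(if head (es ! j) = v then colour_sign c (es ! j) else 0) =
      s * (if forward j then of_bool (vs ! Suc j = v) else - of_bool (vs ! j = v))" if "j < k" for j
    using colour_by_direction[OF that] trail_edge_ends[OF trail, of j] that
    by (auto simp: s_def forward_def colour_sign_def k_def)
  then have "(\<Sum>e\<leftarrow>es. if head e = v then colour_sign c e else 0) =
      s * (\<Sum>j<k. if forward j then of_bool (vs ! Suc j = v) else - of_bool (vs ! j = v))"
    by (simp add: sum_list_sum_nth atLeast0LessThan sum_distrib_left k_def)
  also have "\<dots> =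
      s * (of_bool (forward (k - 1) \<and> vs ! k = v) - of_bool (\<not> forward 0 \<and> vs ! 0 = v))"
    using alternating_direction_sum[of k forward "(!) vs" v, OF \<open>0 < k\<close> forward_alternates] by simp
  also have "forward (k - 1) \<and> vs ! k = v \<longleftrightarrow> v = last vs \<and> head (last es) = v"
  proof -
    have "vs \<noteq> []" "es \<noteq> []"
      using \<open>0 < k\<close> \<open>length vs = Suc k\<close> by (auto simp: k_def)
    then have "last vs = vs ! k" "last es = es ! (k - 1)"
      using \<open>length vs = Suc k\<close> by (simp_all add: last_conv_nth k_def)
    then show ?thesis
      using \<open>0 < k\<close> by (auto simp: forward_def)
  qed
  also have "\<not> forward 0 \<and> vs ! 0 = v \<longleftrightarrow> v = vs ! 0 \<and> head (es ! 0) = v"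
  proof -
    have "tail (es ! 0) \<noteq> head (es ! 0)"
      using loopless \<open>0 < k\<close> by (simp add: k_def)
    then show ?thesis
      using trail_edge_ends[OF trail, of 0] \<open>0 < k\<close> by (auto simp: forward_def k_def)
  qed
  finally show ?thesis
    by (auto simp: s_def)
qed

lemma ad_path_head_balance_le_1:
  assumes "ad_path E tail head (vs, es)" and "\<forall>e\<in>set es. tail e \<noteq> head e"
    and "\<forall>i. Suc i < length es \<longrightarrow> c (es ! i) \<noteq> c (es ! Suc i)"
  shows "\<bar>\<Sum>e\<leftarrow>es. if head e = v then colour_sign c e else 0\<bar> \<le> 1"
    and "(\<Sum>e\<leftarrow>es. if head e = v then colour_sign c e else 0) \<noteq> 0 \<Longrightarrow>
      incoming_endpoint head v (vs, es)"
  using ad_path_head_balance[OF assms, of v] by (auto simp: incoming_endpoint_def)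

lemma card_filter_diff_eq_sum_colour_sign:
  assumes "finite A"
  shows "int (card {e\<in>A. c e}) - int (card {e\<in>A. \<not> c e}) = (\<Sum>e\<in>A. colour_sign c e)"
  using assms by (simp add: colour_sign_def sum.If_cases Int_def)

lemma sum_over_ad_decomposition:
  assumes "ad_decomposition V E tail head D \<kappa>"
  shows "(\<Sum>e\<in>E. g e) = (\<Sum>P\<in>D. \<Sum>e\<leftarrow>snd P. g e)"
proof -
  have "finite D" and E: "(\<Union>P\<in>D. set (snd P)) = E"
    and "\<forall>P\<in>D. \<forall>Q\<in>D. P \<noteq> Q \<longrightarrow> set (snd P) \<inter> set (snd Q) = {}"
    using assms by (auto simp: ad_decomposition_def)
  then have "(\<Sum>e\<in>E. g e) = (\<Sum>P\<in>D. \<Sum>e\<in>set (snd P). g e)"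
    unfolding E[symmetric] by (intro sum.UNION_disjoint) auto
  also have "\<dots> = (\<Sum>P\<in>D. \<Sum>e\<leftarrow>snd P. g e)"
    using assms by (intro sum.cong refl)
      (auto simp: ad_decomposition_def ad_path_def trail_def sum_list_distinct_conv_sum_set)
  finally show ?thesis .
qed

lemma abs_sum_le_1_if_supported_on_one:
  fixes T :: "'a \<Rightarrow> int"
  assumes "finite D" and "card {P\<in>D. Q P} \<le> 1"
    and "\<And>P. P \<in> D \<Longrightarrow> \<bar>T P\<bar> \<le> 1" and "\<And>P. P \<in> D \<Longrightarrow> T P \<noteq> 0 \<Longrightarrow> Q P"
  shows "\<bar>\<Sum>P\<in>D. T P\<bar> \<le> 1"
proof -
  have "(\<Sum>P\<in>D. T P) = (\<Sum>P\<in>{P\<in>D. Q P}. T P)"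
    using assms(1,4) by (intro sum.mono_neutral_right) auto
  also have "\<bar>\<dots>\<bar> \<le> (\<Sum>P\<in>{P\<in>D. Q P}. \<bar>T P\<bar>)"
    by (rule sum_abs)
  also have "\<dots> \<le> (\<Sum>P\<in>{P\<in>D. Q P}. 1)"
    using assms(3) by (intro sum_mono) auto
  also have "\<dots> \<le> 1"
    using assms(2) by simp
  finally show ?thesis .
qed

lemma oriented_graph_reverse:
  "oriented_graph V E tail head \<Longrightarrow> oriented_graph V E head tail"
  by (auto simp: oriented_graph_def insert_commute)

lemma trail_reverse: "trail E tail head P \<Longrightarrow> trail E head tail P"
  by (auto simp: trail_def insert_commute split: prod.splits)

lemma ad_path_reverse: "ad_path E tail head P \<Longrightarrow> ad_path E head tail P"
  unfolding ad_path_def using trail_reverse by (fastforce split: prod.splits)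

lemma incoming_endpoint_reverse:
  assumes "trail E tail head (vs, es)" and "es \<noteq> []" and "\<forall>e\<in>set es. tail e \<noteq> head e"
  shows "incoming_endpoint tail v (vs, es) \<longleftrightarrow> outgoing_endpoint head v (vs, es)"
proof -
  have "tail (es ! 0) \<noteq> head (es ! 0)" "tail (last es) \<noteq> head (last es)"
    using assms(2,3) by simp_all
  moreover have "length vs = Suc (length es)"
    using assms(1) by (simp add: trail_def)
  then have "vs \<noteq> []"
    by auto
  then have "last es = es ! (length es - 1)" "last vs = vs ! length es"
    using assms(2) \<open>length vs = Suc (length es)\<close> by (simp_all add: last_conv_nth)
  ultimately show ?thesis
    using trail_edge_ends[OF assms(1), of 0] trail_edge_ends[OF assms(1), of "length es - 1"] assms(2)
    by (auto simp: incoming_endpoint_def outgoing_endpoint_def)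
qed

lemma ad_decomposition_reverse:
  assumes "oriented_graph V E tail head" and "ad_decomposition V E tail head D \<kappa>"
  shows "ad_decomposition V E head tail D \<kappa>"
proof -
  have "incoming_endpoint tail v P \<longleftrightarrow> outgoing_endpoint head v P"
    "outgoing_endpoint tail v P \<longleftrightarrow> incoming_endpoint head v P" if "P \<in> D" for v P
  proof -
    obtain vs es where P: "P = (vs, es)"
      by fastforce
    have "ad_path E tail head (vs, es)" and "\<forall>e\<in>E. tail e \<noteq> head e"
      using assms that by (auto simp: ad_decomposition_def oriented_graph_def P)
    then have "trail E tail head (vs, es)" "es \<noteq> []" "\<forall>e\<in>set es. tail e \<noteq> head e"
      by (auto simp: ad_path_def trail_def)
    then show "incoming_endpoint tail v P \<longleftrightarrow> outgoing_endpoint head v P"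
      "outgoing_endpoint tail v P \<longleftrightarrow> incoming_endpoint head v P"
      using incoming_endpoint_reverse trail_reverse by (metis P)+
  qed
  then have "{P\<in>D. incoming_endpoint tail v P} = {P\<in>D. outgoing_endpoint head v P}"
    "{P\<in>D. outgoing_endpoint tail v P} = {P\<in>D. incoming_endpoint head v P}" for v
    by blast+
  moreover have "\<forall>P\<in>D. ad_path E head tail P"
    using assms(2) ad_path_reverse unfolding ad_decomposition_def by blast
  ultimately show ?thesis
    using assms(2) unfolding ad_decomposition_def by simp
qed

lemma ad_decomposition_head_discrepancy_le_1:
  assumes graph: "oriented_graph V E tail head" and decomp: "ad_decomposition V E tail head D 1"
    and colouring: "alternating_colouring D c" and "v \<in> V"
  shows "\<bar>int (card {e\<in>{e\<in>E. c e}. head e = v}) - int (card {e\<in>{e\<in>E. \<not> c e}. head e = v})\<bar> \<le> 1"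
proof -
  let ?balance = "\<lambda>e. if head e = v then colour_sign c e else 0"
  have "finite E"
    using graph by (simp add: oriented_graph_def)
  have regroup: "{e\<in>{e\<in>E. c e}. head e = v} = {e\<in>{e\<in>E. head e = v}. c e}"
    "{e\<in>{e\<in>E. \<not> c e}. head e = v} = {e\<in>{e\<in>E. head e = v}. \<not> c e}"
    by auto
  have "int (card {e\<in>{e\<in>E. c e}. head e = v}) - int (card {e\<in>{e\<in>E. \<not> c e}. head e = v}) =
      (\<Sum>e\<in>{e\<in>E. head e = v}. colour_sign c e)"
    unfolding regroup using \<open>finite E\<close> by (intro card_filter_diff_eq_sum_colour_sign) simp
  also have "\<dots> = (\<Sum>e\<in>E. ?balance e)"
    using \<open>finite E\<close> by (rule sum.inter_filter)
  also have "\<dots> = (\<Sum>P\<in>D. \<Sum>e\<leftarrow>snd P. ?balance e)"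
    using decomp by (rule sum_over_ad_decomposition)
  also have "\<bar>\<dots>\<bar> \<le> 1"
  proof (rule abs_sum_le_1_if_supported_on_one)
    show "finite D" and "card {P\<in>D. incoming_endpoint head v P} \<le> 1"
      using decomp \<open>v \<in> V\<close> by (auto simp: ad_decomposition_def)
  next
    fix P assume "P \<in> D"
    obtain vs es where P: "P = (vs, es)"
      by fastforce
    have "ad_path E tail head (vs, es)"
      using decomp \<open>P \<in> D\<close> by (auto simp: ad_decomposition_def P)
    moreover have "\<forall>e\<in>set es. tail e \<noteq> head e"
      using graph \<open>ad_path E tail head (vs, es)\<close>
      by (auto simp: oriented_graph_def ad_path_def trail_def)
    moreover have "\<forall>i. Suc i < length es \<longrightarrow> c (es ! i) \<noteq> c (es ! Suc i)"
      using colouring \<open>P \<in> D\<close> by (auto simp: alternating_colouring_def P)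
    ultimately show "\<bar>\<Sum>e\<leftarrow>snd P. ?balance e\<bar> \<le> 1"
      and "(\<Sum>e\<leftarrow>snd P. ?balance e) \<noteq> 0 \<Longrightarrow> incoming_endpoint head v P"
      using ad_path_head_balance_le_1 by (simp_all add: P)
  qed
  finally show ?thesis .
qed

theorem theorem4p5:
  fixes V :: "'v set" and E :: "'e set" and tail head :: "'e \<Rightarrow> 'v"
    and D :: "('v list \<times> 'e list) set" and c :: "'e \<Rightarrow> bool"
  assumes "oriented_graph V E tail head"
    and "ad_decomposition V E tail head D 1"
    and "alternating_colouring D c"
  shows "oriented_degree_splitting V E tail head {e\<in>E. c e} {e\<in>E. \<not> c e} 1"
proof -
  have "oriented_graph V E head tail"
    using assms(1) by (rule oriented_graph_reverse)
  moreover have "ad_decomposition V E head tail D 1"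
    using assms(1,2) by (rule ad_decomposition_reverse)
  ultimately show ?thesis
    using ad_decomposition_head_discrepancy_le_1[OF assms]
      ad_decomposition_head_discrepancy_le_1[of V E head tail D c, OF _ _ assms(3)]
    by (auto simp: oriented_degree_splitting_def)
qed

end
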